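(* Let $\mathfrak{g}$ be a symmetric social storage network on $N$ agents with stability point $\hat\eta$, which has evolved from the null network. Suppose $\hat\eta$ is odd and $\mathfrak{g}$ has $\kappa\ge2$ connected components. Suppose at least two of the components each have either at most $\hat\eta$ agents, or an odd number of agents greater than $\hat\eta$. Then $\mathfrak{g}$ is not bilaterally stable.
   Context: A network is a simple undirected graph on a finite set $\mathbf{A}$ of $N$ agents, and $\eta_i(\mathfrak{g})$ is the degree (neighbourhood size) of $i$. Parameters are: disk failure rate $\lambda\in(0,1)$, per-link cost $c$, data worths $\beta_i>0$, storage $s_i$, data size $d_i$ and budget $b_i$. Remaining storage is $RS_i=s_i-\sum_{j\text{ neighbour of }i}d_j$ and remaining budget is $RB_i=b_i-c\,\eta_i(\mathfrak{g})$. A symmetric social storage network is one of the following four types. (a) SVN with sufficient storage under the Multi-Objective Framework (MO): - $\beta_i=\beta$, with $\beta,\lambda,c\in(0,1)$; - $s_i\ge\sum_{j\ne i}d_j$; - $u_i=\beta(1-\lambda^{\eta_i})-c\eta_i$; - it is assumed that $c<\beta(1-\lambda)$ and $L=|\ln(c/(\beta(1-\lambda)))|/|\ln\lambda|$ is not an integer; the stability point is $\hat\eta=\lceil L\rceil$. (b) SV-SRN under MO: - as in (a) but with $s_i=s$ and $d_i=d$ (with $s/d$ an integer) instead of sufficient storage; - the stability point is $\hat\eta=\min\{\lceil L\rceil,s/d\}$. (c) SVN with sufficient storage and budget under the Single-Objective Framework (SO): - $\beta_i=\beta$; - $s_i\ge\sum_{j\ne i}d_j$ and $b_i\ge c(N-1)$;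 - $u_i=\beta(1-\lambda^{\eta_i})$; - the stability point is $\hat\eta=N-1$. (d) SRN under SO: - $s_i=s$, $d_i=d$, $b_i=b$ (with $s/d$ and $b/c$ integers); - $u_i=\beta_i(1-\lambda^{\eta_i})$; - the stability point is $\hat\eta=\min\{s/d,b/c\}$. Agent $i$ is willing to add the link $\langle ij\rangle$ if $u_i(\mathfrak{g}+\langle ij\rangle)>u_i(\mathfrak{g})$, together with $RS_j\ge d_i$ in types (b) and (d), and additionally $RB_i\ge c$ in type (d). Bilateral stability means both of the following hold. 1. For every link $\langle ij\rangle$: if $u_i(\mathfrak{g}-\langle ij\rangle)>u_i(\mathfrak{g})$, then $u_j(\mathfrak{g}-\langle ij\rangle)<u_j(\mathfrak{g})$. 2. For every non-link $\langle ij\rangle$: if $i$ is willing to add $\langle ij\rangle$, then $j$ is not willing to add $\langle ij\rangle$. $\mathfrak{g}$ has evolved from the null network if it is obtained from the network with no links by a finite sequence of single link additions $\langle ij\rangle$, each performed only when both $i$ and $j$ are willing to add it at that moment. *)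

theory Defs
  imports Complex_Main
begin

text \<open>SVN_MO: SVN with sufficient storage under MO; SVSRN_MO: SV-SRN under MO;
  SVN_SO: SVN with sufficient storage and budget under SO; SRN_SO: SRN under SO.\<close>
datatype ntype = SVN_MO | SVSRN_MO | SVN_SO | SRN_SO

record 'a ssn =
  agents :: "'a set"
  lam    :: real
  cost   :: real
  beta   :: "'a \<Rightarrow> real"
  stor   :: "'a \<Rightarrow> real"
  dsize  :: "'a \<Rightarrow> real"
  budget :: "'a \<Rightarrow> real"
  kind   :: ntype

text \<open>A network is a symmetric irreflexive relation on the agents (a link <ij> is
  represented by both pairs (i,j) and (j,i)).\<close>
definition is_network :: "'a ssn \<Rightarrow> ('a \<times> 'a) set \<Rightarrow> bool" where
  "is_network P E \<longleftrightarrow> E \<subseteq> agents P \<times> agents P \<and> sym E \<and> irrefl E"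

definition nbrs :: "'a ssn \<Rightarrow> ('a \<times> 'a) set \<Rightarrow> 'a \<Rightarrow> 'a set" where
  "nbrs P E i = {j \<in> agents P. (i, j) \<in> E}"

definition deg :: "'a ssn \<Rightarrow> ('a \<times> 'a) set \<Rightarrow> 'a \<Rightarrow> nat" where
  "deg P E i = card (nbrs P E i)"

definition RS :: "'a ssn \<Rightarrow> ('a \<times> 'a) set \<Rightarrow> 'a \<Rightarrow> real" where
  "RS P E i = stor P i - (\<Sum>j\<in>nbrs P E i. dsize P j)"

definition RB :: "'a ssn \<Rightarrow> ('a \<times> 'a) set \<Rightarrow> 'a \<Rightarrow> real" where
  "RB P E i = budget P i - cost P * real (deg P E i)"

definition util :: "'a ssn \<Rightarrow> ('a \<times> 'a) set \<Rightarrow> 'a \<Rightarrow> real" where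
  "util P E i =
     (if kind P \<in> {SVN_MO, SVSRN_MO}
      then beta P i * (1 - lam P ^ deg P E i) - cost P * real (deg P E i)
      else beta P i * (1 - lam P ^ deg P E i))"

definition add_link :: "('a \<times> 'a) set \<Rightarrow> 'a \<Rightarrow> 'a \<Rightarrow> ('a \<times> 'a) set" where
  "add_link E i j = E \<union> {(i, j), (j, i)}"

definition del_link :: "('a \<times> 'a) set \<Rightarrow> 'a \<Rightarrow> 'a \<Rightarrow> ('a \<times> 'a) set" where
  "del_link E i j = E - {(i, j), (j, i)}"

definition willing :: "'a ssn \<Rightarrow> ('a \<times> 'a) set \<Rightarrow> 'a \<Rightarrow> 'a \<Rightarrow> bool" where
  "willing P E i j \<longleftrightarrow>
     util P (add_link E i j) i > util P E i
     \<and> (kind P \<in> {SVSRN_MO, SRN_SO} \<longrightarrow> RS P E j \<ge> dsize P i)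
     \<and> (kind P = SRN_SO \<longrightarrow> RB P E i \<ge> cost P)"

definition bilat_stable :: "'a ssn \<Rightarrow> ('a \<times> 'a) set \<Rightarrow> bool" where
  "bilat_stable P E \<longleftrightarrow>
     (\<forall>i j. (i, j) \<in> E \<longrightarrow>
        util P (del_link E i j) i > util P E i \<longrightarrow> util P (del_link E i j) j < util P E j)
   \<and> (\<forall>i\<in>agents P. \<forall>j\<in>agents P. i \<noteq> j \<longrightarrow> (i, j) \<notin> E \<longrightarrow>
        willing P E i j \<longrightarrow> \<not> willing P E j i)"

inductive evolved :: "'a ssn \<Rightarrow> ('a \<times> 'a) set \<Rightarrow> bool" for P where
  null: "evolved P {}"
| step: "\<lbrakk> evolved P E; i \<in> agents P; j \<in> agents P; i \<noteq> j; (i, j) \<notin> E;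
           willing P E i j; willing P E j i \<rbrakk> \<Longrightarrow> evolved P (add_link E i j)"

definition components :: "'a ssn \<Rightarrow> ('a \<times> 'a) set \<Rightarrow> 'a set set" where
  "components P E = (\<lambda>i. {j \<in> agents P. (i, j) \<in> E\<^sup>*}) ` agents P"

definition Lval :: "real \<Rightarrow> real \<Rightarrow> real \<Rightarrow> real" where
  "Lval lm c b = \<bar>ln (c / (b * (1 - lm)))\<bar> / \<bar>ln lm\<bar>"

definition sym_ssn :: "'a ssn \<Rightarrow> nat \<Rightarrow> bool" where
  "sym_ssn P eta \<longleftrightarrow>
     finite (agents P) \<and> 0 < lam P \<and> lam P < 1 \<and> 0 < cost P \<and>
     (\<forall>i\<in>agents P. beta P i > 0) \<and>
     (case kind P of
        SVN_MO \<Rightarrow> (\<exists>b. (\<forall>i\<in>agents P. beta P i = b) \<and> b < 1 \<and> cost P < 1 \<and>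
             (\<forall>i\<in>agents P. stor P i \<ge> (\<Sum>j\<in>agents P - {i}. dsize P j)) \<and>
             cost P < b * (1 - lam P) \<and> Lval (lam P) (cost P) b \<notin> \<int> \<and>
             int eta = \<lceil>Lval (lam P) (cost P) b\<rceil>)
      | SVSRN_MO \<Rightarrow> (\<exists>b s d (k::nat). (\<forall>i\<in>agents P. beta P i = b) \<and> b < 1 \<and> cost P < 1 \<and>
             (\<forall>i\<in>agents P. stor P i = s \<and> dsize P i = d) \<and> d > 0 \<and> s = real k * d \<and>
             cost P < b * (1 - lam P) \<and> Lval (lam P) (cost P) b \<notin> \<int> \<and>
             eta = min (nat \<lceil>Lval (lam P) (cost P) b\<rceil>) k)
      | SVN_SO \<Rightarrow> (\<exists>b. (\<forall>i\<in>agents P. beta P i = b) \<and>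
             (\<forall>i\<in>agents P. stor P i \<ge> (\<Sum>j\<in>agents P - {i}. dsize P j)) \<and>
             (\<forall>i\<in>agents P. budget P i \<ge> cost P * (real (card (agents P)) - 1)) \<and>
             eta = card (agents P) - 1)
      | SRN_SO \<Rightarrow> (\<exists>s d bu (k::nat) (m::nat).
             (\<forall>i\<in>agents P. stor P i = s \<and> dsize P i = d \<and> budget P i = bu) \<and>
             d > 0 \<and> s = real k * d \<and> bu = real m * cost P \<and> eta = min k m))"

end

theory Submission
  imports Defs
begin

text \<open>In a network evolved from the null network no agent ever exceeds degree \<open>\<eta>\<close>, and two
  unlinked agents of degree below \<open>\<eta>\<close> are always mutually willing to link. A component with at
  most \<open>\<eta>\<close> agents has all degrees below \<open>\<eta>\<close>; an odd component in which every degree equals the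
  odd number \<open>\<eta>\<close> would have an odd degree sum, contradicting the handshake lemma. So each of the
  two given components contains an agent of degree below \<open>\<eta>\<close>; these agents are unlinked and
  mutually willing, which violates bilateral stability.\<close>

lemma mo_marginal_gain_iff:
  fixes lm c b :: real and d :: nat
  assumes "0 < lm" "lm < 1" "0 < c" "c < b * (1 - lm)"
  shows "b * (1 - lm ^ Suc d) - c * real (Suc d) > b * (1 - lm ^ d) - c * real d
           \<longleftrightarrow> real d < Lval lm c b"
proof -
  have b: "b > 0" using assms by (smt (verit) mult_nonpos_nonneg)
  define r where "r = c / (b * (1 - lm))"
  have r: "0 < r" "r < 1" using assms b by (auto simp: r_def field_simps)
  have "b * (1 - lm ^ Suc d) - c * real (Suc d) > b * (1 - lm ^ d) - c * real d
        \<longleftrightarrow> c < b * (1 - lm) * lm ^ d"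
    by (simp add: algebra_simps)
  also have "\<dots> \<longleftrightarrow> r < lm ^ d"
    using assms b by (simp add: r_def pos_divide_less_eq mult.commute)
  also have "\<dots> \<longleftrightarrow> ln r < ln (lm ^ d)"
    using r assms by simp
  also have "\<dots> \<longleftrightarrow> ln r < real d * ln lm"
    using assms by (simp add: ln_realpow)
  also have "\<dots> \<longleftrightarrow> real d < ln r / ln lm"
    using assms by (simp add: neg_less_divide_eq)
  also have "ln r / ln lm = Lval lm c b"
    using r assms unfolding Lval_def r_def[symmetric] by simp
  finally show ?thesis .
qed

lemma even_card_sym_irrefl:
  assumes "finite R" "sym R" "irrefl R"
  shows "even (card R)"
  using assms
proof (induction R rule: finite_psubset_induct)
  case (psubset R)
  show ?case
  proof (cases "R = {}")
    case False
    then obtain a b where ab: "(a, b) \<in> R" by auto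
    have ba: "(b, a) \<in> R" and "a \<noteq> b"
      using ab psubset.prems by (auto dest: symD simp: irrefl_def)
    define R' where "R' = R - {(a, b), (b, a)}"
    have "R' \<subset> R" using ab unfolding R'_def by auto
    moreover have "sym R'" "irrefl R'"
      using psubset.prems unfolding R'_def sym_def irrefl_def by auto
    ultimately have "even (card R')" using psubset.IH by blast
    moreover have "R = R' \<union> {(a, b), (b, a)}" "R' \<inter> {(a, b), (b, a)} = {}"
      using ab ba unfolding R'_def by auto
    then have "card R = card R' + card {(a, b), (b, a)}"
      using psubset.hyps by (metis card_Un_disjoint finite_Un finite.intros)
    then have "card R = card R' + 2"
      using \<open>a \<noteq> b\<close> by simp
    ultimately show ?thesis by simp
  qed simp
qed

lemma handshake_even:
  assumes "finite C" "sym E" "irrefl E" "E `` C \<subseteq> C"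
  shows "even (\<Sum>j\<in>C. card (E `` {j}))"
proof -
  have "E `` {j} \<subseteq> C" if "j \<in> C" for j
    using assms(4) that by blast
  then have fin: "\<forall>j\<in>C. finite (E `` {j})"
    using assms(1) finite_subset by blast
  have "E \<inter> C \<times> C = Sigma C (\<lambda>j. E `` {j})"
    using assms(4) by blast
  moreover have "sym (E \<inter> C \<times> C)" "irrefl (E \<inter> C \<times> C)"
    using assms(2,3) unfolding sym_def irrefl_def by blast+
  then have "even (card (E \<inter> C \<times> C))"
    using assms(1) by (intro even_card_sym_irrefl) auto
  ultimately show ?thesis
    using card_SigmaI[OF assms(1) fin] by simp
qed

lemma nbrs_eq_Image:
  assumes "is_network P E"
  shows "nbrs P E i = E `` {i}"
  using assms unfolding is_network_def nbrs_def by auto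

lemma deg_le_card_minus_one:
  assumes "finite C" "i \<in> C" "nbrs P E i \<subseteq> C" "irrefl E"
  shows "deg P E i \<le> card C - 1"
proof -
  have "nbrs P E i \<subseteq> C - {i}"
    using assms(3,4) by (auto simp: nbrs_def irrefl_def)
  then show ?thesis
    unfolding deg_def using assms(1,2) by (metis card_Diff_singleton card_mono finite_Diff)
qed

lemma deg_add_link:
  assumes "finite (agents P)" "i \<in> agents P" "j \<in> agents P" "i \<noteq> j" "(i, j) \<notin> E" "sym E"
  shows "deg P (add_link E i j) l = (if l = i \<or> l = j then Suc (deg P E l) else deg P E l)"
proof -
  have "(j, i) \<notin> E" using assms(5,6) by (auto dest: symD)
  then have fresh: "j \<notin> nbrs P E i" "i \<notin> nbrs P E j"
    using assms(5) by (auto simp: nbrs_def)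
  have "nbrs P (add_link E i j) l =
      (if l = i then insert j (nbrs P E l) else if l = j then insert i (nbrs P E l) else nbrs P E l)"
    using assms(2-4) unfolding nbrs_def add_link_def by auto
  moreover have "finite (nbrs P E l)" using assms(1) by (simp add: nbrs_def)
  ultimately show ?thesis unfolding deg_def using fresh by auto
qed

lemma sym_ssn_basics:
  assumes "sym_ssn P eta"
  shows "finite (agents P)" "0 < lam P" "lam P < 1" "0 < cost P" "\<forall>i\<in>agents P. beta P i > 0"
  using assms unfolding sym_ssn_def by auto

lemma util_add_link_gt_iff:
  assumes "sym_ssn P eta" "i \<in> agents P" "j \<in> agents P" "i \<noteq> j" "(i, j) \<notin> E" "sym E"
  shows "util P (add_link E i j) i > util P E i \<longleftrightarrow>
    (kind P \<in> {SVN_MO, SVSRN_MO} \<longrightarrow> real (deg P E i) < Lval (lam P) (cost P) (beta P i))"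
proof -
  note basics = sym_ssn_basics[OF assms(1)]
  have deg: "deg P (add_link E i j) i = Suc (deg P E i)"
    using deg_add_link[OF basics(1) assms(2-6)] by simp
  show ?thesis
  proof (cases "kind P \<in> {SVN_MO, SVSRN_MO}")
    case True
    then have "cost P < beta P i * (1 - lam P)"
      using assms(1,2) unfolding sym_ssn_def by (auto split: ntype.splits)
    then show ?thesis
      using True mo_marginal_gain_iff[OF basics(2-4)] unfolding util_def deg by simp
  next
    case False
    have "lam P ^ Suc (deg P E i) < lam P ^ deg P E i" using basics(2,3) by simp
    then show ?thesis
      using False basics(5) assms(2) unfolding util_def deg by simp
  qed
qed

lemma RS_ge_dsize_iff:
  assumes "\<forall>l\<in>agents P. stor P l = s \<and> dsize P l = d" "d > 0" "s = real k * d"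
    "i \<in> agents P" "j \<in> agents P"
  shows "RS P E j \<ge> dsize P i \<longleftrightarrow> deg P E j < k"
proof -
  have "(\<Sum>l\<in>nbrs P E j. dsize P l) = real (deg P E j) * d"
    using assms(1) by (simp add: deg_def nbrs_def)
  then have "RS P E j \<ge> dsize P i \<longleftrightarrow> (real (deg P E j) + 1) * d \<le> real k * d"
    using assms(1,3-5) by (simp add: RS_def algebra_simps)
  also have "\<dots> \<longleftrightarrow> deg P E j < k"
    using assms(2) by simp linarith
  finally show ?thesis .
qed

lemma RB_ge_cost_iff:
  assumes "budget P i = real m * cost P" "cost P > 0"
  shows "RB P E i \<ge> cost P \<longleftrightarrow> deg P E i < m"
proof -
  have "RB P E i \<ge> cost P \<longleftrightarrow> (real (deg P E i) + 1) * cost P \<le> real m * cost P"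
    unfolding RB_def assms(1) by (simp add: algebra_simps)
  also have "\<dots> \<longleftrightarrow> deg P E i < m"
    using assms(2) by simp linarith
  finally show ?thesis .
qed

lemma willing_SVN_SO:
  assumes "sym_ssn P eta" "kind P = SVN_SO"
    "i \<in> agents P" "j \<in> agents P" "i \<noteq> j" "(i, j) \<notin> E" "sym E"
  shows "willing P E i j"
  using util_add_link_gt_iff[OF assms(1,3-7)] assms(2) by (simp add: willing_def)

text \<open>Outside type (c), \<open>\<eta>\<close> is the least of the cost--benefit threshold \<open>\<lceil>L\<rceil>\<close>, the storage
  capacity \<open>s/d\<close> of the partner and the budget capacity \<open>b/c\<close>, whichever apply.\<close>
lemma mutually_willing_iff:
  assumes "sym_ssn P eta" "kind P \<noteq> SVN_SO"
    "i \<in> agents P" "j \<in> agents P" "i \<noteq> j" "(i, j) \<notin> E" "sym E"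
  shows "willing P E i j \<and> willing P E j i \<longleftrightarrow> deg P E i < eta \<and> deg P E j < eta"
proof -
  have ji: "(j, i) \<notin> E" using assms(6,7) by (auto dest: symD)
  note gain_i = util_add_link_gt_iff[OF assms(1,3-7)]
  note gain_j = util_add_link_gt_iff[OF assms(1,4,3) assms(5)[symmetric] ji assms(7)]
  have lt_ceiling: "real n < L \<longleftrightarrow> n < nat \<lceil>L\<rceil>" for n :: nat and L :: real
    by linarith
  show ?thesis
  proof (cases "kind P")
    case SVN_MO
    then obtain b where beta: "\<forall>i\<in>agents P. beta P i = b"
        and "int eta = \<lceil>Lval (lam P) (cost P) b\<rceil>"
      using assms(1) unfolding sym_ssn_def by auto
    then have eta: "eta = nat \<lceil>Lval (lam P) (cost P) b\<rceil>" by linarith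
    have "willing P E i j \<longleftrightarrow> deg P E i < eta"
      using SVN_MO gain_i beta assms(3) lt_ceiling unfolding eta by (simp add: willing_def)
    moreover have "willing P E j i \<longleftrightarrow> deg P E j < eta"
      using SVN_MO gain_j beta assms(4) lt_ceiling unfolding eta by (simp add: willing_def)
    ultimately show ?thesis by simp
  next
    case SVSRN_MO
    then obtain b s d k where beta: "\<forall>i\<in>agents P. beta P i = b"
        and sd: "\<forall>i\<in>agents P. stor P i = s \<and> dsize P i = d" "d > 0" "s = real k * d"
        and eta: "eta = min (nat \<lceil>Lval (lam P) (cost P) b\<rceil>) k"
      using assms(1) unfolding sym_ssn_def by auto
    have "willing P E i j \<longleftrightarrow> deg P E i < nat \<lceil>Lval (lam P) (cost P) b\<rceil> \<and> deg P E j < k"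
      using SVSRN_MO gain_i beta assms(3) lt_ceiling RS_ge_dsize_iff[OF sd assms(3,4)]
      by (simp add: willing_def)
    moreover have "willing P E j i \<longleftrightarrow> deg P E j < nat \<lceil>Lval (lam P) (cost P) b\<rceil> \<and> deg P E i < k"
      using SVSRN_MO gain_j beta assms(4) lt_ceiling RS_ge_dsize_iff[OF sd assms(4,3)]
      by (simp add: willing_def)
    ultimately show ?thesis unfolding eta by auto
  next
    case SRN_SO
    then have "\<exists>s d bu (k::nat) (m::nat).
        (\<forall>i\<in>agents P. stor P i = s \<and> dsize P i = d \<and> budget P i = bu) \<and>
        d > 0 \<and> s = real k * d \<and> bu = real m * cost P \<and> eta = min k m"
      using assms(1) unfolding sym_ssn_def by simp
    then obtain s d bu k m
      where "\<forall>i\<in>agents P. stor P i = s \<and> dsize P i = d \<and> budget P i = bu"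
        and d: "d > 0" "s = real k * d" and "bu = real m * cost P" and eta: "eta = min k m"
      by blast
    then have sd: "\<forall>i\<in>agents P. stor P i = s \<and> dsize P i = d"
        and budget: "\<forall>i\<in>agents P. budget P i = real m * cost P"
      by auto
    have cost: "cost P > 0" using sym_ssn_basics(4)[OF assms(1)] .
    have "willing P E i j \<longleftrightarrow> deg P E j < k \<and> deg P E i < m"
      using SRN_SO gain_i RS_ge_dsize_iff[OF sd d assms(3,4)]
        RB_ge_cost_iff[OF budget[rule_format, OF assms(3)] cost]
      by (simp add: willing_def)
    moreover have "willing P E j i \<longleftrightarrow> deg P E i < k \<and> deg P E j < m"
      using SRN_SO gain_j RS_ge_dsize_iff[OF sd d assms(4,3)]
        RB_ge_cost_iff[OF budget[rule_format, OF assms(4)] cost]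
      by (simp add: willing_def)
    ultimately show ?thesis unfolding eta by auto
  qed (use assms(2) in simp)
qed

lemma mutually_willing_if_deg_less:
  assumes "sym_ssn P eta" "i \<in> agents P" "j \<in> agents P" "i \<noteq> j" "(i, j) \<notin> E" "sym E"
    "deg P E i < eta" "deg P E j < eta"
  shows "willing P E i j \<and> willing P E j i"
proof (cases "kind P = SVN_SO")
  case True
  have "(j, i) \<notin> E" using assms(5,6) by (auto dest: symD)
  then show ?thesis
    using willing_SVN_SO[OF assms(1) True] assms(2-6) by auto
next
  case False
  then show ?thesis
    using mutually_willing_iff[OF assms(1) False assms(2-6)] assms(7,8) by simp
qed

lemma evolved_is_network:
  assumes "evolved P E"
  shows "is_network P E"
  using assms
  by induction (auto simp: is_network_def add_link_def sym_def irrefl_def)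

lemma evolved_deg_le:
  assumes "sym_ssn P eta" "evolved P E" "l \<in> agents P"
  shows "deg P E l \<le> eta"
  using assms(2,3)
proof (induction arbitrary: l)
  case null
  then show ?case by (simp add: deg_def nbrs_def)
next
  case (step E i j)
  have fin: "finite (agents P)" using sym_ssn_basics(1)[OF assms(1)] .
  have sym: "sym E" using evolved_is_network[OF step.hyps(1)] by (simp add: is_network_def)
  show ?case
  proof (cases "kind P = SVN_SO")
    case True
    then have "eta = card (agents P) - 1" using assms(1) unfolding sym_ssn_def by simp
    moreover have "is_network P (add_link E i j)"
      using evolved_is_network[OF evolved.step[OF step.hyps]] .
    then have "nbrs P (add_link E i j) l \<subseteq> agents P" "irrefl (add_link E i j)"
      by (auto simp: is_network_def nbrs_def)
    ultimately show ?thesis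
      using deg_le_card_minus_one[OF fin step.prems] by simp
  next
    case False
    have "deg P E i < eta \<and> deg P E j < eta"
      using mutually_willing_iff[OF assms(1) False step.hyps(2-5) sym] step.hyps(6,7) by simp
    then show ?thesis
      using deg_add_link[OF fin step.hyps(2-5) sym] step.IH[OF step.prems] by auto
  qed
qed

definition component_of :: "'a ssn \<Rightarrow> ('a \<times> 'a) set \<Rightarrow> 'a \<Rightarrow> 'a set" where
  "component_of P E i = {j \<in> agents P. (i, j) \<in> E\<^sup>*}"

lemma component_of_eq:
  assumes "sym E" "j \<in> component_of P E i"
  shows "component_of P E j = component_of P E i"
proof -
  have "(i, j) \<in> E\<^sup>*" "(j, i) \<in> E\<^sup>*"
    using assms sym_rtrancl[OF assms(1)] by (auto simp: component_of_def dest: symD)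
  then show ?thesis
    unfolding component_of_def by (meson rtrancl_trans)
qed

lemma component_eq_component_of:
  assumes "sym E" "C \<in> components P E" "i \<in> C"
  shows "C = component_of P E i"
proof -
  obtain a where "C = component_of P E a"
    using assms(2) unfolding components_def component_of_def by auto
  then show ?thesis using component_of_eq[OF assms(1)] assms(3) by simp
qed

lemma component_Image_subset:
  assumes "is_network P E" "C \<in> components P E"
  shows "E `` C \<subseteq> C"
  using assms unfolding components_def is_network_def by (auto intro: rtrancl_into_rtrancl)

lemma component_has_deg_less:
  assumes "finite (agents P)" "is_network P E" "\<forall>l\<in>agents P. deg P E l \<le> eta" "odd eta"
    "C \<in> components P E" "card C \<le> eta \<or> odd (card C)"
  shows "\<exists>i\<in>C. deg P E i < eta"
proof -
  have irrefl: "irrefl E" and sym: "sym E" using assms(2) by (auto simp: is_network_def)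
  have CA: "C \<subseteq> agents P" and "C \<noteq> {}" using assms(5) by (auto simp: components_def)
  then have fin: "finite C" and card: "card C \<ge> 1"
    using assms(1) by (auto simp: finite_subset Suc_le_eq card_gt_0_iff)
  have closed: "E `` C \<subseteq> C" using component_Image_subset[OF assms(2,5)] .
  have deg_eq: "deg P E j = card (E `` {j})" for j
    using nbrs_eq_Image[OF assms(2)] by (simp add: deg_def)
  show ?thesis
  proof (cases "card C \<le> eta")
    case True
    obtain i where i: "i \<in> C" using \<open>C \<noteq> {}\<close> by auto
    have "nbrs P E i \<subseteq> C"
      using closed i nbrs_eq_Image[OF assms(2)] by auto
    then have "deg P E i \<le> card C - 1"
      using deg_le_card_minus_one[OF fin i _ irrefl] by blast
    then show ?thesis
      using i True card by (intro bexI[of _ i]) auto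
  next
    case False
    show ?thesis
    proof (rule ccontr)
      assume "\<not> ?thesis"
      then have "\<forall>j\<in>C. deg P E j = eta" using assms(3) CA by (meson le_antisym not_less subsetD)
      then have "(\<Sum>j\<in>C. card (E `` {j})) = card C * eta" by (simp add: deg_eq[symmetric])
      then show False
        using handshake_even[OF fin sym irrefl closed] False assms(4,6) by simp
    qed
  qed
qed

theorem proposition3:
  fixes P :: "'a ssn" and E :: "('a \<times> 'a) set" and eta :: nat
  assumes "sym_ssn P eta"
    and "evolved P E"
    and "odd eta"
    and "card (components P E) \<ge> 2"
    and "\<exists>C1\<in>components P E. \<exists>C2\<in>components P E. C1 \<noteq> C2 \<and>
           (card C1 \<le> eta \<or> (odd (card C1) \<and> card C1 > eta)) \<and>
           (card C2 \<le> eta \<or> (odd (card C2) \<and> card C2 > eta))"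
  shows "\<not> bilat_stable P E"
proof
  assume stable: "bilat_stable P E"
  have net: "is_network P E" using evolved_is_network[OF assms(2)] .
  then have sym: "sym E" by (simp add: is_network_def)
  have deg_le: "\<forall>l\<in>agents P. deg P E l \<le> eta" using evolved_deg_le[OF assms(1,2)] by blast
  note deg_less = component_has_deg_less[OF sym_ssn_basics(1)[OF assms(1)] net deg_le assms(3)]
  obtain C1 C2 where C: "C1 \<in> components P E" "C2 \<in> components P E" "C1 \<noteq> C2"
    and "card C1 \<le> eta \<or> odd (card C1)" "card C2 \<le> eta \<or> odd (card C2)"
    using assms(5) by auto
  then obtain i j where ij: "i \<in> C1" "j \<in> C2" "deg P E i < eta" "deg P E j < eta"
    using deg_less by meson
  have agents: "i \<in> agents P" "j \<in> agents P"
    using C ij by (auto simp: components_def)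
  have comps: "C1 = component_of P E i" "C2 = component_of P E j"
    using component_eq_component_of[OF sym] C ij by auto
  have unlinked: "i \<noteq> j" "(i, j) \<notin> E"
    using C(3) comps agents component_of_eq[OF sym, of j P i] by (auto simp: component_of_def)
  have "willing P E i j \<and> willing P E j i"
    using mutually_willing_if_deg_less[OF assms(1) agents unlinked sym ij(3,4)] .
  then show False
    using stable agents unlinked unfolding bilat_stable_def by blast
qed

end
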